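(* For $n\ge 0$ let $C_n$ denote the cycle graph on $n$ vertices (with the conventions that $C_0$ is the empty graph, $C_1$ is a single vertex, $C_2$ is a single edge, and for $n\ge 3$ $C_n$ is the connected graph on $n$ vertices all of degree $2$). Then, as formal power series in $x$, $$\sum_{n\ge 0} \mathrm{sa}(C_n;t)\, x^n = \frac12 + \frac{1}{2\sqrt{1+4x^2}}\cdot\frac{(t^2+1)x + t\sqrt{1+4x^2}}{t-(t^2-1)x}.$$
   Context: All graphs are finite, simple and undirected. For a graph $G=(V,E)$ and $V'\subseteq V$, $G|_{V'}$ denotes the induced subgraph on $V'$. The signed a-number $\mathrm{sa}(G)$ is defined recursively: $\mathrm{sa}(G)=1$ if $G$ is the empty graph (no vertices); $\mathrm{sa}(G)=0$ if $G$ has a connected component with an odd number of vertices; otherwise $\mathrm{sa}(G)=-\sum_{V'\subsetneq V}\mathrm{sa}(G|_{V'})$. The signed a-polynomial of $G$ is $\mathrm{sa}(G;t)=\sum_{V'\subseteq V}\mathrm{sa}(G|_{V'})\,t^{|V\setminus V'|}$. *)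

theory Defs
  imports "HOL-Computational_Algebra.Polynomial" "HOL-Computational_Algebra.Formal_Power_Series"
    "HOL-Computational_Algebra.Fraction_Field"
begin

text \<open>A finite simple graph is represented by a vertex set V and a symmetric, irreflexive
  adjacency relation E; the induced subgraph on V' is represented by (E, V').
  Only the restriction of E to the current vertex set matters.\<close>

definition component :: "('a \<Rightarrow> 'a \<Rightarrow> bool) \<Rightarrow> 'a set \<Rightarrow> 'a \<Rightarrow> 'a set" where
  "component E V v = {w \<in> V. (\<lambda>x y. x \<in> V \<and> y \<in> V \<and> E x y)\<^sup>*\<^sup>* v w}"

definition has_odd_component :: "('a \<Rightarrow> 'a \<Rightarrow> bool) \<Rightarrow> 'a set \<Rightarrow> bool" where
  "has_odd_component E V \<longleftrightarrow> (\<exists>v\<in>V. odd (card (component E V v)))"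

function sa :: "('a \<Rightarrow> 'a \<Rightarrow> bool) \<Rightarrow> 'a set \<Rightarrow> int" where
  "sa E V = (if V = {} then 1
             else if \<not> finite V then 0
             else if has_odd_component E V then 0
             else - (\<Sum>V'\<in>{V'. V' \<subset> V}. sa E V'))"
  by pat_completeness auto
termination
  by (relation "measure (\<lambda>(E, V). card V)") (auto intro: psubset_card_mono)

declare sa.simps [simp del]

definition sa_poly :: "('a \<Rightarrow> 'a \<Rightarrow> bool) \<Rightarrow> 'a set \<Rightarrow> int poly" where
  "sa_poly E V = (\<Sum>V'\<in>Pow V. monom (sa E V') (card (V - V')))"

text \<open>Cycle graph C_n on vertices {0..<n}: i ~ j iff i, j distinct and consecutive mod n.
  C_0 empty, C_1 single vertex, C_2 single edge.\<close>
definition cycle_adj :: "nat \<Rightarrow> nat \<Rightarrow> nat \<Rightarrow> bool" where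
  "cycle_adj n i j \<longleftrightarrow> i \<noteq> j \<and> (j = Suc i mod n \<or> i = Suc j mod n)"

definition cycle_verts :: "nat \<Rightarrow> nat set" where
  "cycle_verts n = {..<n}"

type_synonym ratfun = "rat poly fract"

definition tvar :: ratfun where "tvar = Fract [:0, 1:] 1"

definition poly_to_ratfun :: "int poly \<Rightarrow> ratfun" where
  "poly_to_ratfun p = Fract (map_poly of_int p) 1"

text \<open>The power series sqrt(1 + 4 x^2) with constant term 1.\<close>
definition sqrt_1_4x2 :: "ratfun fps" where
  "sqrt_1_4x2 = fps_radical (\<lambda>_ _. 1) 2 (1 + 4 * fps_X ^ 2)"

end

theory Submission
  imports Defs "HOL-Computational_Algebra.Polynomial_Factorial"
begin

text \<open>
  Sort the induced subgraphs of the cycle \<open>C\<^sub>n\<close> by their first and last missing vertex: what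
  remains is the arc outside these two vertices, a path, together with an induced subgraph of the
  path strictly between them. As \<open>sa\<close> is multiplicative over disjoint unions and invariant under
  isomorphism, the cycle series is expressed through \<open>P(x) = \<Sum> sa(P\<^sub>m) x\<^sup>m\<close> and
  \<open>W\<^sub>t(x) = \<Sum> sa(P\<^sub>m; t) x\<^sup>m\<close>, and cutting a path at its first missing vertex gives
  \<open>W\<^sub>t = P + t x P W\<^sub>t\<close>.

  At \<open>t = 1\<close> the sa-polynomial of a non-empty graph without odd components vanishes, while
  \<open>sa\<close> itself vanishes on odd paths and cycles. Comparing the series with their images under
  \<open>x \<mapsto> -x\<close> therefore gives \<open>P + x\<^sup>2 P\<^sup>2 = 1\<close>, i.e. \<open>sqrt(1 + 4x\<^sup>2) = 1 + 2x\<^sup>2 P\<close>, and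
  \<open>\<Sum> sa(C\<^sub>n) x\<^sup>n = 1 - x\<^sup>2 (x P)'\<close>; substituting into the decomposition yields the closed form.
\<close>

section \<open>The signed a-number\<close>

definition induced_adj :: "('a \<Rightarrow> 'a \<Rightarrow> bool) \<Rightarrow> 'a set \<Rightarrow> 'a \<Rightarrow> 'a \<Rightarrow> bool" where
  "induced_adj E V x y \<longleftrightarrow> x \<in> V \<and> y \<in> V \<and> E x y"

lemma component_eq: "component E V v = {w \<in> V. (induced_adj E V)\<^sup>*\<^sup>* v w}"
  unfolding component_def induced_adj_def by simp

lemma component_subset: "component E V v \<subseteq> V"
  unfolding component_def by auto

lemma sa_empty [simp]: "sa E {} = 1"
  by (subst sa.simps) simp

lemma sa_eq_neg_sum_psubsets:
  "finite V \<Longrightarrow> V \<noteq> {} \<Longrightarrow> \<not> has_odd_component E V \<Longrightarrow>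
    sa E V = - (\<Sum>V'\<in>Pow V - {V}. sa E V')"
  by (subst sa.simps) (simp add: Pow_def set_diff_eq psubset_eq conj_commute)

lemma sa_has_odd_component: "has_odd_component E V \<Longrightarrow> sa E V = 0"
  by (subst sa.simps) (auto simp: has_odd_component_def)

lemma sum_Pow_split_top:
  "finite V \<Longrightarrow> (\<Sum>V'\<in>Pow V. g V') = g V + (\<Sum>V'\<in>Pow V - {V}. g V')"
  by (simp add: sum.remove)

lemma sum_sa_Pow_eq_0:
  assumes "finite V" "V \<noteq> {}" "\<not> has_odd_component E V"
  shows "(\<Sum>V'\<in>Pow V. sa E V') = 0"
  using sa_eq_neg_sum_psubsets[OF assms] sum_Pow_split_top[OF assms(1), of "sa E"] by simp

lemma connected_has_odd_component_iff:
  assumes "v \<in> V" "\<And>w. w \<in> V \<Longrightarrow> (induced_adj E V)\<^sup>*\<^sup>* v w \<and> (induced_adj E V)\<^sup>*\<^sup>* w v"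
  shows "has_odd_component E V \<longleftrightarrow> odd (card V)"
proof -
  have "component E V u = V" if "u \<in> V" for u
    unfolding component_eq using assms that by (auto intro: rtranclp_trans)
  then show ?thesis unfolding has_odd_component_def using assms(1) by auto
qed

definition graph_iso ::
    "('a \<Rightarrow> 'b) \<Rightarrow> ('a \<Rightarrow> 'a \<Rightarrow> bool) \<Rightarrow> 'a set \<Rightarrow> ('b \<Rightarrow> 'b \<Rightarrow> bool) \<Rightarrow> 'b set \<Rightarrow> bool" where
  "graph_iso f E V E' W \<longleftrightarrow> bij_betw f V W \<and> (\<forall>x\<in>V. \<forall>y\<in>V. E x y \<longleftrightarrow> E' (f x) (f y))"

lemma graph_iso_inv_into:
  assumes "graph_iso f E V E' W"
  shows "graph_iso (inv_into V f) E' W E V"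
proof -
  have bij: "bij_betw f V W" using assms unfolding graph_iso_def by simp
  have "inv_into V f y \<in> V" "f (inv_into V f y) = y" if "y \<in> W" for y
    using bij that by (auto simp: bij_betw_def inv_into_into f_inv_into_f)
  then show ?thesis
    using assms bij_betw_inv_into[OF bij] unfolding graph_iso_def by metis
qed

lemma graph_iso_subset:
  "graph_iso f E V E' W \<Longrightarrow> V' \<subseteq> V \<Longrightarrow> graph_iso f E V' E' (f ` V')"
  unfolding graph_iso_def by (auto intro: bij_betw_subset)

lemma rtranclp_induced_adj_iso:
  assumes "graph_iso f E V E' W" "(induced_adj E V)\<^sup>*\<^sup>* v w"
  shows "(induced_adj E' W)\<^sup>*\<^sup>* (f v) (f w)"
  using assms(2)
proof (induction rule: rtranclp_induct)
  case (step y z)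
  then have "induced_adj E' W (f y) (f z)"
    using assms(1) unfolding induced_adj_def graph_iso_def bij_betw_def by auto
  with step.IH show ?case by (rule rtranclp.rtrancl_into_rtrancl)
qed simp

lemma component_iso:
  assumes iso: "graph_iso f E V E' W" and "v \<in> V"
  shows "f ` component E V v = component E' W (f v)"
proof
  have bij: "bij_betw f V W" using iso unfolding graph_iso_def by simp
  show "f ` component E V v \<subseteq> component E' W (f v)"
    using rtranclp_induced_adj_iso[OF iso] bij
    unfolding component_eq bij_betw_def by blast
  let ?g = "inv_into V f"
  show "component E' W (f v) \<subseteq> f ` component E V v"
  proof
    fix w assume "w \<in> component E' W (f v)"
    then have w: "w \<in> W" "(induced_adj E' W)\<^sup>*\<^sup>* (f v) w" unfolding component_eq by auto
    have "(induced_adj E V)\<^sup>*\<^sup>* (?g (f v)) (?g w)"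
      using rtranclp_induced_adj_iso[OF graph_iso_inv_into[OF iso] w(2)] .
    moreover have "?g (f v) = v" "?g w \<in> V" "f (?g w) = w"
      using bij \<open>v \<in> V\<close> w(1) by (auto simp: bij_betw_def inv_into_into f_inv_into_f)
    ultimately show "w \<in> f ` component E V v" unfolding component_eq by (metis (mono_tags) image_eqI mem_Collect_eq)
  qed
qed

lemma has_odd_component_iso:
  assumes iso: "graph_iso f E V E' W"
  shows "has_odd_component E' W \<longleftrightarrow> has_odd_component E V"
proof -
  have bij: "bij_betw f V W" using iso unfolding graph_iso_def by simp
  have "card (component E' W (f v)) = card (component E V v)" if "v \<in> V" for v
    using component_iso[OF iso that] component_subset bij
    by (metis bij_betw_def card_image inj_on_subset)
  then show ?thesis
    using bij unfolding has_odd_component_def bij_betw_def by auto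
qed

lemma sa_iso:
  assumes "graph_iso f E V E' W"
  shows "sa E' W = sa E V"
  using assms
proof (induction "card V" arbitrary: V W rule: less_induct)
  case less
  have bij: "bij_betw f V W" using less.prems unfolding graph_iso_def by simp
  consider "V = {}" | "infinite V" | "has_odd_component E V"
    | "finite V" "V \<noteq> {}" "\<not> has_odd_component E V" by blast
  then show ?case
  proof cases
    case 1
    then show ?thesis using bij by (simp add: bij_betw_def)
  next
    case 2
    then have "infinite W" using bij bij_betw_finite by blast
    with 2 show ?thesis by (subst (1 2) sa.simps) auto
  next
    case 3
    then show ?thesis using has_odd_component_iso[OF less.prems] sa_has_odd_component by metis
  next
    case 4
    then have W: "finite W" "W \<noteq> {}" "\<not> has_odd_component E' W"
      using bij has_odd_component_iso[OF less.prems] by (auto simp: bij_betw_def)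
    have img: "bij_betw (image f) (Pow V - {V}) (Pow W - {W})"
      using bij by (intro bij_betw_DiffI bij_betw_image_Pow) (auto simp: bij_betw_def)
    have "(\<Sum>V'\<in>Pow V - {V}. sa E V') = (\<Sum>V'\<in>Pow V - {V}. sa E' (f ` V'))"
    proof (rule sum.cong)
      fix V' assume "V' \<in> Pow V - {V}"
      then have "V' \<subset> V" by auto
      then show "sa E V' = sa E' (f ` V')"
        using less.hyps[of V' "f ` V'"] graph_iso_subset[OF less.prems] 4(1) psubset_card_mono
        by (metis psubset_imp_subset)
    qed simp
    also have "\<dots> = (\<Sum>W'\<in>Pow W - {W}. sa E' W')"
      using sum.reindex_bij_betw[OF img] by simp
    finally show ?thesis using sa_eq_neg_sum_psubsets 4 W by metis
  qed
qed

definition separated :: "('a \<Rightarrow> 'a \<Rightarrow> bool) \<Rightarrow> 'a set \<Rightarrow> 'a set \<Rightarrow> bool" where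
  "separated E A B \<longleftrightarrow> A \<inter> B = {} \<and> (\<forall>x\<in>A. \<forall>y\<in>B. \<not> E x y \<and> \<not> E y x)"

lemma separated_sym: "separated E A B \<Longrightarrow> separated E B A"
  unfolding separated_def by auto

lemma separated_mono: "separated E A B \<Longrightarrow> A' \<subseteq> A \<Longrightarrow> B' \<subseteq> B \<Longrightarrow> separated E A' B'"
  unfolding separated_def by blast

lemma component_Un_separated:
  assumes "separated E A B" "v \<in> A"
  shows "component E (A \<union> B) v = component E A v"
proof -
  have "w \<in> A \<and> (induced_adj E A)\<^sup>*\<^sup>* v w" if "(induced_adj E (A \<union> B))\<^sup>*\<^sup>* v w" for w
    using that
  proof (induction rule: rtranclp_induct)
    case (step y z)
    then have "induced_adj E A y z"
      using assms(1) unfolding induced_adj_def separated_def by auto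
    with step show ?case
      by (meson induced_adj_def rtranclp.rtrancl_into_rtrancl)
  qed (use assms(2) in simp)
  moreover have "induced_adj E A \<le> induced_adj E (A \<union> B)"
    unfolding induced_adj_def by auto
  ultimately show ?thesis
    unfolding component_eq by (auto dest: rtranclp_mono[THEN predicate2D])
qed

lemma has_odd_component_Un_separated:
  assumes "separated E A B"
  shows "has_odd_component E (A \<union> B) \<longleftrightarrow> has_odd_component E A \<or> has_odd_component E B"
  using component_Un_separated[OF assms] component_Un_separated[OF separated_sym[OF assms]]
  unfolding has_odd_component_def by (metis Un_iff sup_commute)

lemma sum_Pow_Un_mult:
  fixes g h :: "'a set \<Rightarrow> 'b::comm_semiring_1"
  assumes "A \<inter> B = {}" "finite A" "finite B"
  shows "(\<Sum>V\<in>Pow (A \<union> B). g (V \<inter> A) * h (V \<inter> B)) = (\<Sum>X\<in>Pow A. g X) * (\<Sum>Y\<in>Pow B. h Y)"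
proof -
  have parts: "(X \<union> Y) \<inter> A = X" "(X \<union> Y) \<inter> B = Y" if "X \<subseteq> A" "Y \<subseteq> B" for X Y
    using assms(1) that by blast+
  have "(\<Sum>V\<in>Pow (A \<union> B). g (V \<inter> A) * h (V \<inter> B)) = (\<Sum>(X, Y)\<in>Pow A \<times> Pow B. g X * h Y)"
    by (rule sum.reindex_bij_witness[where j = "\<lambda>V. (V \<inter> A, V \<inter> B)" and i = "\<lambda>(X, Y). X \<union> Y"])
      (use assms(1) in \<open>auto simp: parts\<close>)
  also have "\<dots> = (\<Sum>X\<in>Pow A. g X) * (\<Sum>Y\<in>Pow B. h Y)"
    by (simp add: sum.cartesian_product[symmetric] sum_product)
  finally show ?thesis .
qed

text \<open>The sum of \<open>sa\<close> over all subsets of \<open>A \<union> B\<close> factors and vanishes; by induction every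
  proper subset obeys the product formula, which leaves it for the top term.\<close>

lemma sa_Un_separated:
  assumes "separated E A B" "finite A" "finite B"
  shows "sa E (A \<union> B) = sa E A * sa E B"
  using assms
proof (induction "card (A \<union> B)" arbitrary: A B rule: less_induct)
  case less
  consider "A = {} \<or> B = {}" | "has_odd_component E A \<or> has_odd_component E B"
    | "A \<noteq> {}" "B \<noteq> {}" "\<not> has_odd_component E A" "\<not> has_odd_component E B" by blast
  then show ?case
  proof cases
    case 1
    then show ?thesis by auto
  next
    case 2
    then show ?thesis
      using has_odd_component_Un_separated[OF less.prems(1)] by (auto simp: sa_has_odd_component)
  next
    case 3
    have disj: "A \<inter> B = {}" using less.prems(1) unfolding separated_def by auto
    have fin: "finite (A \<union> B)" using less.prems by simp
    have even: "\<not> has_odd_component E (A \<union> B)"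
      using has_odd_component_Un_separated[OF less.prems(1)] 3 by simp
    have "(\<Sum>V\<in>Pow (A \<union> B) - {A \<union> B}. sa E (V \<inter> A) * sa E (V \<inter> B))
        = (\<Sum>V\<in>Pow (A \<union> B) - {A \<union> B}. sa E V)"
    proof (rule sum.cong)
      fix V assume V: "V \<in> Pow (A \<union> B) - {A \<union> B}"
      then have split: "V = (V \<inter> A) \<union> (V \<inter> B)" by auto
      have "card ((V \<inter> A) \<union> (V \<inter> B)) < card (A \<union> B)"
        using V fin split psubset_card_mono by (metis Diff_iff PowD psubsetI singletonI)
      with split show "sa E (V \<inter> A) * sa E (V \<inter> B) = sa E V"
        using less.hyps[of "V \<inter> A" "V \<inter> B"] separated_mono[OF less.prems(1)] less.prems(2,3)
        by (metis finite_Int inf_le2)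
    qed simp
    moreover have "(\<Sum>V\<in>Pow (A \<union> B). sa E (V \<inter> A) * sa E (V \<inter> B)) = 0"
      using sum_Pow_Un_mult[OF disj less.prems(2,3), of "sa E" "sa E"]
        sum_sa_Pow_eq_0[OF less.prems(2) 3(1,3)] by simp
    ultimately have "sa E A * sa E B + (\<Sum>V\<in>Pow (A \<union> B) - {A \<union> B}. sa E V) = 0"
      using sum_Pow_split_top[OF fin, of "\<lambda>V. sa E (V \<inter> A) * sa E (V \<inter> B)"] disj
      by (simp add: Int_absorb2 Int_Un_distrib2 Int_commute)
    then show ?thesis
      using sa_eq_neg_sum_psubsets[OF fin _ even] 3(1) by simp
  qed
qed

section \<open>Paths\<close>

definition path_adj :: "nat \<Rightarrow> nat \<Rightarrow> bool" where
  "path_adj i j \<longleftrightarrow> j = Suc i \<or> i = Suc j"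

definition path_sa :: "nat \<Rightarrow> int" where
  "path_sa m = sa path_adj {..<m}"

definition path_poly :: "'a::comm_ring_1 \<Rightarrow> nat \<Rightarrow> 'a" where
  "path_poly t m = (\<Sum>S\<in>Pow {..<m}. of_int (sa path_adj S) * t ^ (m - card S))"

lemma path_poly_0 [simp]: "path_poly t 0 = 1"
  unfolding path_poly_def by simp

lemma sa_path_shift: "sa path_adj ((+) c ` S) = sa path_adj S"
  by (rule sa_iso[of "(+) c"]) (auto simp: graph_iso_def bij_betw_def inj_on_def path_adj_def)

lemma path_adj_connected:
  assumes "k < m"
  shows "(induced_adj path_adj {..<m})\<^sup>*\<^sup>* 0 k \<and> (induced_adj path_adj {..<m})\<^sup>*\<^sup>* k 0"
  using assms
proof (induction k)
  case (Suc k)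
  then have "induced_adj path_adj {..<m} k (Suc k)" "induced_adj path_adj {..<m} (Suc k) k"
    unfolding induced_adj_def path_adj_def by auto
  with Suc show ?case
    by (meson Suc_lessD rtranclp.rtrancl_into_rtrancl converse_rtranclp_into_rtranclp)
qed simp

lemma has_odd_component_path: "m > 0 \<Longrightarrow> has_odd_component path_adj {..<m} \<longleftrightarrow> odd m"
  using connected_has_odd_component_iff[of 0 "{..<m}" path_adj] path_adj_connected by auto

lemma path_sa_odd: "odd m \<Longrightarrow> path_sa m = 0"
  unfolding path_sa_def using has_odd_component_path sa_has_odd_component by (metis odd_pos)

lemma path_poly_1_even:
  assumes "even m" "m > 0"
  shows "path_poly 1 m = 0"
proof -
  have "(\<Sum>S\<in>Pow {..<m}. sa path_adj S) = 0"
    by (rule sum_sa_Pow_eq_0) (use assms has_odd_component_path in auto)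
  then show ?thesis by (simp add: path_poly_def flip: of_int_sum)
qed

lemma sa_path_split:
  assumes "finite T"
  shows "sa path_adj ({..<j} \<union> (+) (Suc j) ` T) = path_sa j * sa path_adj T"
proof -
  have "sa path_adj ({..<j} \<union> (+) (Suc j) ` T) = sa path_adj {..<j} * sa path_adj ((+) (Suc j) ` T)"
    by (rule sa_Un_separated) (auto simp: separated_def path_adj_def assms)
  then show ?thesis by (simp only: sa_path_shift path_sa_def)
qed

lemma psubsets_least_missing:
  assumes "j < m"
  shows "{S \<in> Pow {..<m} - {{..<m}}. (LEAST i. i \<notin> S) = j} =
         (\<lambda>T. {..<j} \<union> (+) (Suc j) ` T) ` Pow {..<m - 1 - j}"
proof
  show "(\<lambda>T. {..<j} \<union> (+) (Suc j) ` T) ` Pow {..<m - 1 - j}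
      \<subseteq> {S \<in> Pow {..<m} - {{..<m}}. (LEAST i. i \<notin> S) = j}"
  proof
    fix S assume "S \<in> (\<lambda>T. {..<j} \<union> (+) (Suc j) ` T) ` Pow {..<m - 1 - j}"
    then obtain T where T: "T \<subseteq> {..<m - 1 - j}" "S = {..<j} \<union> (+) (Suc j) ` T" by auto
    have "(LEAST i. i \<notin> S) = j"
      by (rule Least_equality) (use T in auto)
    moreover have "S \<subseteq> {..<m}" "j \<notin> S" using T assms by auto
    ultimately show "S \<in> {S \<in> Pow {..<m} - {{..<m}}. (LEAST i. i \<notin> S) = j}"
      using assms by auto
  qed
  show "{S \<in> Pow {..<m} - {{..<m}}. (LEAST i. i \<notin> S) = j}
      \<subseteq> (\<lambda>T. {..<j} \<union> (+) (Suc j) ` T) ` Pow {..<m - 1 - j}"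
  proof
    fix S assume "S \<in> {S \<in> Pow {..<m} - {{..<m}}. (LEAST i. i \<notin> S) = j}"
    then have S: "S \<subseteq> {..<m}" "S \<noteq> {..<m}" "(LEAST i. i \<notin> S) = j" by auto
    then obtain x where "x \<notin> S" by auto
    then have "j \<notin> S" using S(3) LeastI[of "\<lambda>i. i \<notin> S"] by auto
    moreover have "i \<in> S" if "i < j" for i using S(3) not_less_Least that by blast
    ultimately have "S = {..<j} \<union> (+) (Suc j) ` {y. Suc j + y \<in> S}"
      using less_imp_Suc_add[of j] by (auto simp: image_iff) (metis linorder_neqE_nat)
    moreover have "{y. Suc j + y \<in> S} \<subseteq> {..<m - 1 - j}" using S(1) by auto
    ultimately show "S \<in> (\<lambda>T. {..<j} \<union> (+) (Suc j) ` T) ` Pow {..<m - 1 - j}" by blast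
  qed
qed

lemma inj_on_Un_shift_image:
  fixes c :: nat
  assumes "A \<inter> (+) c ` B = {}"
  shows "inj_on (\<lambda>T. A \<union> (+) c ` T) (Pow B)"
proof (rule inj_onI)
  fix T1 T2 assume T: "T1 \<in> Pow B" "T2 \<in> Pow B" and eq: "A \<union> (+) c ` T1 = A \<union> (+) c ` T2"
  have mem: "x \<in> T \<longleftrightarrow> x \<in> B \<and> c + x \<in> A \<union> (+) c ` T" if "T \<subseteq> B" for x T
    using assms that by auto
  show "T1 = T2"
  proof (rule set_eqI)
    fix x
    show "x \<in> T1 \<longleftrightarrow> x \<in> T2"
      using T unfolding mem[where T = T1, OF PowD[OF T(1)]] mem[where T = T2, OF PowD[OF T(2)]] eq
      by simp
  qed
qed

lemma sum_least_missing:
  assumes "j < m"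
  shows "(\<Sum>S | S \<in> Pow {..<m} - {{..<m}} \<and> (LEAST i. i \<notin> S) = j.
      of_int (sa path_adj S) * t ^ (m - card S)) = of_int (path_sa j) * t * path_poly t (m - 1 - j)"
proof -
  let ?piece = "\<lambda>T. {..<j} \<union> (+) (Suc j) ` T"
  have inj: "inj_on ?piece (Pow {..<m - 1 - j})"
    by (rule inj_on_Un_shift_image) auto
  have "(\<Sum>S | S \<in> Pow {..<m} - {{..<m}} \<and> (LEAST i. i \<notin> S) = j.
        of_int (sa path_adj S) * t ^ (m - card S))
      = (\<Sum>T\<in>Pow {..<m - 1 - j}. of_int (sa path_adj (?piece T)) * t ^ (m - card (?piece T)))"
    unfolding psubsets_least_missing[OF assms] by (rule sum.reindex[OF inj, unfolded o_def])
  also have "\<dots> = (\<Sum>T\<in>Pow {..<m - 1 - j}.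
      of_int (path_sa j) * t * (of_int (sa path_adj T) * t ^ (m - 1 - j - card T)))"
  proof (rule sum.cong[OF refl])
    fix T assume "T \<in> Pow {..<m - 1 - j}"
    then have fin: "finite T" and "card T \<le> m - 1 - j"
      using finite_subset card_mono[of "{..<m - 1 - j}" T] by auto
    moreover have "card (?piece T) = j + card T"
      by (subst card_Un_disjoint) (auto simp: fin card_image inj_on_def)
    ultimately have "m - card (?piece T) = Suc (m - 1 - j - card T)"
      using assms by simp
    then show "of_int (sa path_adj (?piece T)) * t ^ (m - card (?piece T))
        = of_int (path_sa j) * t * (of_int (sa path_adj T) * t ^ (m - 1 - j - card T))"
      unfolding sa_path_split[OF fin] by (simp add: algebra_simps)
  qed
  also have "\<dots> = of_int (path_sa j) * t * path_poly t (m - 1 - j)"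
    unfolding path_poly_def by (simp add: sum_distrib_left)
  finally show ?thesis .
qed

lemma path_poly_rec:
  "path_poly t m = of_int (path_sa m) + (\<Sum>j<m. of_int (path_sa j) * t * path_poly t (m - 1 - j))"
proof -
  define F where "F S = of_int (sa path_adj S) * t ^ (m - card S)" for S
  define R where "R = Pow {..<m} - {{..<m}}"
  have range: "(\<lambda>S. LEAST i. i \<notin> S) ` R \<subseteq> {..<m}"
  proof
    fix j assume "j \<in> (\<lambda>S. LEAST i. i \<notin> S) ` R"
    then obtain S x where "j = (LEAST i. i \<notin> S)" "x < m" "x \<notin> S" unfolding R_def by auto
    then show "j \<in> {..<m}" using Least_le[of "\<lambda>i. i \<notin> S" x] by simp
  qed
  have "path_poly t m = F {..<m} + sum F R"
    unfolding path_poly_def F_def[symmetric] R_def by (simp add: sum_Pow_split_top)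
  also have "F {..<m} = of_int (path_sa m)" unfolding F_def path_sa_def by simp
  also have "sum F R = (\<Sum>j<m. sum F {S \<in> R. (LEAST i. i \<notin> S) = j})"
    by (rule sum.group[symmetric, OF _ _ range]) (simp_all add: R_def)
  also have "\<dots> = (\<Sum>j<m. of_int (path_sa j) * t * path_poly t (m - 1 - j))"
    unfolding F_def R_def using sum_least_missing by (intro sum.cong) auto
  finally show ?thesis .
qed

section \<open>Cycles\<close>

lemma cycle_adj_iff:
  "x < n \<Longrightarrow> y < n \<Longrightarrow> cycle_adj n x y \<longleftrightarrow>
    y = Suc x \<or> x = Suc y \<or> (Suc x = n \<and> y = 0 \<and> x \<noteq> 0) \<or> (Suc y = n \<and> x = 0 \<and> y \<noteq> 0)"
  unfolding cycle_adj_def by (cases "Suc x = n"; cases "Suc y = n") auto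

lemma has_odd_component_cycle: "n > 0 \<Longrightarrow> has_odd_component (cycle_adj n) {..<n} \<longleftrightarrow> odd n"
proof -
  assume "n > 0"
  have "induced_adj path_adj {..<n} \<le> induced_adj (cycle_adj n) {..<n}"
    unfolding induced_adj_def path_adj_def cycle_adj_def by auto
  then have "(induced_adj (cycle_adj n) {..<n})\<^sup>*\<^sup>* 0 w \<and> (induced_adj (cycle_adj n) {..<n})\<^sup>*\<^sup>* w 0"
    if "w < n" for w
    using path_adj_connected[OF that] rtranclp_mono by blast
  then show ?thesis using connected_has_odd_component_iff[of 0 "{..<n}" "cycle_adj n"] \<open>n > 0\<close> by auto
qed

definition cycle_sa :: "nat \<Rightarrow> int" where
  "cycle_sa n = sa (cycle_adj n) {..<n}"

definition cycle_poly :: "'a::comm_ring_1 \<Rightarrow> nat \<Rightarrow> 'a" where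
  "cycle_poly t n = (\<Sum>S\<in>Pow {..<n}. of_int (sa (cycle_adj n) S) * t ^ (n - card S))"

lemma cycle_sa_odd: "odd n \<Longrightarrow> cycle_sa n = 0"
  unfolding cycle_sa_def using has_odd_component_cycle sa_has_odd_component by (metis odd_pos)

lemma cycle_poly_1_even:
  assumes "even n" "n > 0"
  shows "cycle_poly 1 n = 0"
proof -
  have "(\<Sum>S\<in>Pow {..<n}. sa (cycle_adj n) S) = 0"
    by (rule sum_sa_Pow_eq_0) (use assms has_odd_component_cycle in auto)
  then show ?thesis by (simp add: cycle_poly_def flip: of_int_sum)
qed

text \<open>If \<open>i \<le> j\<close> are the least and the greatest vertex missing from a proper subset of the
  cycle, the subset is the arc \<open>j + 1, \<dots>, n - 1, 0, \<dots>, i - 1\<close> (a path with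
  \<open>n - 1 - (j - i)\<close> vertices) together with a subset of the path \<open>i + 1, \<dots>, j - 1\<close>.\<close>

definition outer_arc :: "nat \<Rightarrow> nat \<Rightarrow> nat \<Rightarrow> nat set" where
  "outer_arc n i j = {..<i} \<union> {Suc j..<n}"

definition outer_arc_index :: "nat \<Rightarrow> nat \<Rightarrow> nat \<Rightarrow> nat" where
  "outer_arc_index n j k = (if k < n - Suc j then k + Suc j else k - (n - Suc j))"

lemma path_adj_outer_arc_index:
  assumes "i \<le> j" "j < n" "k < n - 1 - (j - i)" "l < n - 1 - (j - i)"
  shows "path_adj k l \<longleftrightarrow> cycle_adj n (outer_arc_index n j k) (outer_arc_index n j l)"
proof -
  define c where "c = n - Suc j"
  have a: "n - 1 - (j - i) = c + i" "n = c + Suc j" using assms c_def by auto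
  have kl: "k < c + i" "l < c + i" using assms a by auto
  have idx: "outer_arc_index n j x = (if x < c then x + Suc j else x - c)" for x
    unfolding outer_arc_index_def c_def ..
  have lt: "outer_arc_index n j k < n" "outer_arc_index n j l < n"
    using a kl unfolding idx by auto
  show ?thesis
    unfolding cycle_adj_iff[OF lt] unfolding idx path_adj_def using a kl assms(1)
    by (cases "k < c"; cases "l < c") auto
qed

lemma sa_outer_arc:
  assumes "i \<le> j" "j < n"
  shows "sa (cycle_adj n) (outer_arc n i j) = path_sa (n - 1 - (j - i))"
  unfolding path_sa_def
proof (rule sa_iso)
  let ?a = "n - 1 - (j - i)"
  have "inj_on (outer_arc_index n j) {..<?a}"
    unfolding inj_on_def outer_arc_index_def using assms by auto
  moreover have "outer_arc_index n j ` {..<?a} = outer_arc n i j"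
  proof
    show "outer_arc_index n j ` {..<?a} \<subseteq> outer_arc n i j"
      unfolding outer_arc_index_def outer_arc_def using assms by auto
    show "outer_arc n i j \<subseteq> outer_arc_index n j ` {..<?a}"
    proof
      fix x assume x: "x \<in> outer_arc n i j"
      show "x \<in> outer_arc_index n j ` {..<?a}"
      proof (cases "x < i")
        case True
        then have "outer_arc_index n j (x + (n - Suc j)) = x" "x + (n - Suc j) < ?a"
          unfolding outer_arc_index_def using assms by auto
        then show ?thesis by (metis image_eqI lessThan_iff)
      next
        case False
        then have "outer_arc_index n j (x - Suc j) = x" "x - Suc j < ?a"
          using x unfolding outer_arc_index_def outer_arc_def using assms by auto
        then show ?thesis by (metis image_eqI lessThan_iff)
      qed
    qed
  qed
  ultimately show "graph_iso (outer_arc_index n j) path_adj {..<?a} (cycle_adj n) (outer_arc n i j)"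
    using path_adj_outer_arc_index[OF assms] by (auto simp: graph_iso_def bij_betw_def)
qed

lemma sa_cycle_inner:
  assumes "T \<subseteq> {..<j - i - 1}" "j < n"
  shows "sa (cycle_adj n) ((+) (Suc i) ` T) = sa path_adj T"
proof (rule sa_iso)
  have inner: "Suc i + x < j" if "x \<in> T" for x
    using assms(1) that by auto
  have "path_adj x y \<longleftrightarrow> cycle_adj n (Suc i + x) (Suc i + y)" if "x \<in> T" "y \<in> T" for x y
    using inner[OF that(1)] inner[OF that(2)] assms(2)
    by (subst cycle_adj_iff) (auto simp: path_adj_def)
  then show "graph_iso ((+) (Suc i)) path_adj T (cycle_adj n) ((+) (Suc i) ` T)"
    by (auto simp: graph_iso_def bij_betw_def)
qed

lemma sa_cycle_split:
  assumes "i \<le> j" "j < n" "T \<subseteq> {..<j - i - 1}"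
  shows "sa (cycle_adj n) (outer_arc n i j \<union> (+) (Suc i) ` T) = path_sa (n - 1 - (j - i)) * sa path_adj T"
proof -
  have inner: "i < y \<and> y < j" if "y \<in> (+) (Suc i) ` T" for y
    using assms(3) that by auto
  have "separated (cycle_adj n) (outer_arc n i j) ((+) (Suc i) ` T)"
    unfolding separated_def outer_arc_def using assms(2) inner
    by (auto simp: cycle_adj_iff) (fastforce simp: cycle_adj_iff)+
  then have "sa (cycle_adj n) (outer_arc n i j \<union> (+) (Suc i) ` T)
      = sa (cycle_adj n) (outer_arc n i j) * sa (cycle_adj n) ((+) (Suc i) ` T)"
    using assms(3) finite_subset by (intro sa_Un_separated) (auto simp: outer_arc_def)
  then show ?thesis using sa_outer_arc[OF assms(1,2)] sa_cycle_inner[OF assms(3,2)] by simp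
qed

lemma card_cycle_split:
  assumes "i \<le> j" "j < n" "T \<subseteq> {..<j - i - 1}"
  shows "card (outer_arc n i j \<union> (+) (Suc i) ` T) = n - 1 - (j - i) + card T"
proof -
  have inner: "Suc i + x < j" if "x \<in> T" for x
    using assms(3) that by auto
  have "card (outer_arc n i j) = n - 1 - (j - i)"
    unfolding outer_arc_def using assms by (subst card_Un_disjoint) auto
  moreover have "outer_arc n i j \<inter> (+) (Suc i) ` T = {}"
    unfolding outer_arc_def using assms inner by fastforce
  moreover have "finite T" using assms(3) finite_subset by blast
  ultimately show ?thesis
    by (subst card_Un_disjoint) (auto simp: outer_arc_def card_image inj_on_def)
qed

definition missing_range :: "nat \<Rightarrow> nat set \<Rightarrow> nat \<times> nat" where
  "missing_range n S = ((LEAST i. i \<notin> S), (GREATEST j. j < n \<and> j \<notin> S))"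

lemma missing_range_cycle_split:
  assumes "i \<le> j" "j < n" "T \<subseteq> {..<j - i - 1}"
  shows "missing_range n (outer_arc n i j \<union> (+) (Suc i) ` T) = (i, j)"
  unfolding missing_range_def prod.inject
proof
  show "(LEAST x. x \<notin> outer_arc n i j \<union> (+) (Suc i) ` T) = i"
    by (rule Least_equality) (use assms in \<open>auto simp: outer_arc_def\<close>)
  show "(GREATEST x. x < n \<and> x \<notin> outer_arc n i j \<union> (+) (Suc i) ` T) = j"
    by (rule Greatest_equality) (use assms in \<open>auto simp: outer_arc_def\<close>)
qed

lemma cycle_split_missing_range:
  assumes "S \<subseteq> {..<n}" "S \<noteq> {..<n}" "missing_range n S = (i, j)"
  shows "S = outer_arc n i j \<union> (+) (Suc i) ` {y. Suc i + y \<in> S \<and> Suc i + y < j}"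
    (is "S = outer_arc n i j \<union> (+) (Suc i) ` ?T")
proof -
  have least: "(LEAST x. x \<notin> S) = i" and greatest: "(GREATEST x. x < n \<and> x \<notin> S) = j"
    using assms(3) unfolding missing_range_def by auto
  obtain x where x: "x < n" "x \<notin> S" using assms(1,2) by auto
  have iS: "i \<notin> S" using least LeastI[of "\<lambda>i. i \<notin> S" x] x by simp
  have below: "y \<in> S" if "y < i" for y using least not_less_Least that by blast
  have jS: "j \<notin> S" using greatest GreatestI_nat[of "\<lambda>y. y < n \<and> y \<notin> S" x n] x by auto
  have above: "y \<in> S" if "j < y" "y < n" for y
    using greatest Greatest_le_nat[of "\<lambda>y. y < n \<and> y \<notin> S" y n] that by fastforce
  show ?thesis
  proof (rule subset_antisym)
    show "S \<subseteq> outer_arc n i j \<union> (+) (Suc i) ` ?T"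
    proof
      fix y assume y: "y \<in> S"
      consider "y < i" | "y = i" | "i < y" "y < j" | "y = j" | "j < y" by linarith
      then show "y \<in> outer_arc n i j \<union> (+) (Suc i) ` ?T"
      proof cases
        case 3
        then have "y = Suc i + (y - Suc i)" "y - Suc i \<in> ?T" using y by auto
        then show ?thesis by (metis UnI2 image_eqI)
      qed (use y iS jS assms(1) in \<open>auto simp: outer_arc_def\<close>)
    qed
    show "outer_arc n i j \<union> (+) (Suc i) ` ?T \<subseteq> S"
      using below above unfolding outer_arc_def by auto
  qed
qed

lemma psubsets_missing_range:
  assumes "i \<le> j" "j < n"
  shows "{S \<in> Pow {..<n} - {{..<n}}. missing_range n S = (i, j)} =
         (\<lambda>T. outer_arc n i j \<union> (+) (Suc i) ` T) ` Pow {..<j - i - 1}"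
proof
  show "(\<lambda>T. outer_arc n i j \<union> (+) (Suc i) ` T) ` Pow {..<j - i - 1}
      \<subseteq> {S \<in> Pow {..<n} - {{..<n}}. missing_range n S = (i, j)}"
    using missing_range_cycle_split[OF assms] assms by (auto simp: outer_arc_def)
  show "{S \<in> Pow {..<n} - {{..<n}}. missing_range n S = (i, j)}
      \<subseteq> (\<lambda>T. outer_arc n i j \<union> (+) (Suc i) ` T) ` Pow {..<j - i - 1}"
  proof
    fix S assume "S \<in> {S \<in> Pow {..<n} - {{..<n}}. missing_range n S = (i, j)}"
    then have "S = outer_arc n i j \<union> (+) (Suc i) ` {y. Suc i + y \<in> S \<and> Suc i + y < j}"
      by (intro cycle_split_missing_range) auto
    moreover have "{y. Suc i + y \<in> S \<and> Suc i + y < j} \<in> Pow {..<j - i - 1}" by auto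
    ultimately show "S \<in> (\<lambda>T. outer_arc n i j \<union> (+) (Suc i) ` T) ` Pow {..<j - i - 1}"
      by blast
  qed
qed

text \<open>The weight of the block \<open>i, \<dots>, i + d\<close> of a cycle whose two ends are missing: \<open>T\<close> runs
  over the present inner vertices, so \<open>d + 1 - card T\<close> vertices of the block are missing.
  For \<open>d = 0\<close> the block is a single missing vertex, and \<open>d - 1\<close> truncates to \<open>0\<close>.\<close>

definition gap_poly :: "'a::comm_ring_1 \<Rightarrow> nat \<Rightarrow> 'a" where
  "gap_poly t d = (\<Sum>T\<in>Pow {..<d - 1}. of_int (sa path_adj T) * t ^ (d + 1 - card T))"

lemma gap_poly_0 [simp]: "gap_poly t 0 = t"
  unfolding gap_poly_def by simp

lemma gap_poly_Suc [simp]: "gap_poly t (Suc d) = t^2 * path_poly t d"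
  unfolding gap_poly_def path_poly_def sum_distrib_left diff_Suc_1
proof (intro sum.cong refl)
  fix T assume "T \<in> Pow {..<d}"
  then have "card T \<le> d" using card_mono[of "{..<d}" T] by auto
  then have "Suc d + 1 - card T = Suc (Suc (d - card T))" by simp
  then show "of_int (sa path_adj T) * t ^ (Suc d + 1 - card T) = t\<^sup>2 * (of_int (sa path_adj T) * t ^ (d - card T))"
    by (simp add: power2_eq_square algebra_simps)
qed

lemma sum_missing_range:
  assumes "i \<le> j" "j < n"
  shows "(\<Sum>S | S \<in> Pow {..<n} - {{..<n}} \<and> missing_range n S = (i, j).
      of_int (sa (cycle_adj n) S) * t ^ (n - card S)) = of_int (path_sa (n - 1 - (j - i))) * gap_poly t (j - i)"
proof -
  let ?piece = "\<lambda>T. outer_arc n i j \<union> (+) (Suc i) ` T"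
  have inj: "inj_on ?piece (Pow {..<j - i - 1})"
    by (rule inj_on_Un_shift_image) (auto simp: outer_arc_def)
  have "(\<Sum>S | S \<in> Pow {..<n} - {{..<n}} \<and> missing_range n S = (i, j).
        of_int (sa (cycle_adj n) S) * t ^ (n - card S))
      = (\<Sum>T\<in>Pow {..<j - i - 1}. of_int (sa (cycle_adj n) (?piece T)) * t ^ (n - card (?piece T)))"
    unfolding psubsets_missing_range[OF assms] by (rule sum.reindex[OF inj, unfolded o_def])
  also have "\<dots> = (\<Sum>T\<in>Pow {..<j - i - 1}.
      of_int (path_sa (n - 1 - (j - i))) * (of_int (sa path_adj T) * t ^ (j - i + 1 - card T)))"
  proof (rule sum.cong[OF refl])
    fix T assume "T \<in> Pow {..<j - i - 1}"
    then have T: "T \<subseteq> {..<j - i - 1}" by simp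
    then have "card T \<le> j - i - 1" using card_mono[of "{..<j - i - 1}" T] by simp
    then have "n - card (?piece T) = j - i + 1 - card T"
      using card_cycle_split[OF assms T] assms by simp
    then show "of_int (sa (cycle_adj n) (?piece T)) * t ^ (n - card (?piece T))
      = of_int (path_sa (n - 1 - (j - i))) * (of_int (sa path_adj T) * t ^ (j - i + 1 - card T))"
      using sa_cycle_split[OF assms T] by simp
  qed
  also have "\<dots> = of_int (path_sa (n - 1 - (j - i))) * gap_poly t (j - i)"
    unfolding gap_poly_def by (simp add: sum_distrib_left)
  finally show ?thesis .
qed

lemma missing_range_bounds:
  assumes "x < n" "x \<notin> S"
  shows "fst (missing_range n S) \<le> snd (missing_range n S) \<and> snd (missing_range n S) < n"
proof -
  have "(LEAST i. i \<notin> S) \<le> x" using assms(2) by (rule Least_le)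
  moreover have "x \<le> (GREATEST j. j < n \<and> j \<notin> S)" "(GREATEST j. j < n \<and> j \<notin> S) < n"
    using assms Greatest_le_nat[of "\<lambda>y. y < n \<and> y \<notin> S" x n]
      GreatestI_nat[of "\<lambda>y. y < n \<and> y \<notin> S" x n] by auto
  ultimately show ?thesis unfolding missing_range_def by simp
qed

lemma sum_pairs_by_distance:
  fixes f :: "nat \<Rightarrow> 'a::comm_semiring_1"
  shows "(\<Sum>p | fst p \<le> snd p \<and> snd p < n. f (n - 1 - (snd p - fst p))) = (\<Sum>m<n. of_nat (m + 1) * f m)"
proof -
  define K where "K = {p :: nat \<times> nat. fst p \<le> snd p \<and> snd p < n}"
  have finK: "finite K"
    by (rule finite_subset[of _ "{..<n} \<times> {..<n}"]) (auto simp: K_def)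
  have "(\<Sum>p\<in>K. f (n - 1 - (snd p - fst p)))
      = (\<Sum>m<n. \<Sum>p | p \<in> K \<and> n - 1 - (snd p - fst p) = m. f (n - 1 - (snd p - fst p)))"
    by (rule sum.group[symmetric, OF finK]) (auto simp: K_def)
  also have "\<dots> = (\<Sum>m<n. of_nat (m + 1) * f m)"
  proof (rule sum.cong[OF refl])
    fix m assume "m \<in> {..<n}"
    then have m: "m < n" by simp
    have level: "{p \<in> K. n - 1 - (snd p - fst p) = m} = (\<lambda>i. (i, i + (n - 1 - m))) ` {..m}"
    proof
      show "{p \<in> K. n - 1 - (snd p - fst p) = m} \<subseteq> (\<lambda>i. (i, i + (n - 1 - m))) ` {..m}"
      proof
        fix p assume "p \<in> {p \<in> K. n - 1 - (snd p - fst p) = m}"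
        then have "snd p = fst p + (n - 1 - m)" "fst p \<le> m" using m unfolding K_def by auto
        then show "p \<in> (\<lambda>i. (i, i + (n - 1 - m))) ` {..m}"
          by (intro rev_image_eqI[of "fst p"]) (auto simp: prod_eq_iff)
      qed
      show "(\<lambda>i. (i, i + (n - 1 - m))) ` {..m} \<subseteq> {p \<in> K. n - 1 - (snd p - fst p) = m}"
        using m unfolding K_def by auto
    qed
    show "(\<Sum>p | p \<in> K \<and> n - 1 - (snd p - fst p) = m. f (n - 1 - (snd p - fst p))) = of_nat (m + 1) * f m"
      unfolding level using m by (subst sum.reindex) (auto simp: inj_on_def)
  qed
  finally show ?thesis unfolding K_def by simp
qed

lemma cycle_poly_decomp:
  "cycle_poly t n = of_int (cycle_sa n)
     + (\<Sum>m<n. of_nat (m + 1) * of_int (path_sa m) * gap_poly t (n - 1 - m))"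
proof -
  define F where "F S = of_int (sa (cycle_adj n) S) * t ^ (n - card S)" for S
  define R where "R = Pow {..<n} - {{..<n}}"
  define K where "K = {p :: nat \<times> nat. fst p \<le> snd p \<and> snd p < n}"
  have finK: "finite K"
    by (rule finite_subset[of _ "{..<n} \<times> {..<n}"]) (auto simp: K_def)
  have range: "missing_range n ` R \<subseteq> K"
  proof
    fix p assume "p \<in> missing_range n ` R"
    then obtain S x where "p = missing_range n S" "x < n" "x \<notin> S" unfolding R_def by auto
    then show "p \<in> K" using missing_range_bounds unfolding K_def by simp
  qed
  have "cycle_poly t n = F {..<n} + sum F R"
    unfolding cycle_poly_def F_def[symmetric] R_def by (simp add: sum_Pow_split_top)
  also have "F {..<n} = of_int (cycle_sa n)" unfolding F_def cycle_sa_def by simp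
  also have "sum F R = (\<Sum>p\<in>K. sum F {S \<in> R. missing_range n S = p})"
    by (rule sum.group[symmetric, OF _ finK range]) (simp add: R_def)
  also have "\<dots> = (\<Sum>p\<in>K. of_int (path_sa (n - 1 - (snd p - fst p)))
      * gap_poly t (n - 1 - (n - 1 - (snd p - fst p))))"
  proof (rule sum.cong[OF refl])
    fix p assume "p \<in> K"
    then obtain i j where "p = (i, j)" "i \<le> j" "j < n" unfolding K_def by (cases p) auto
    then show "sum F {S \<in> R. missing_range n S = p} = of_int (path_sa (n - 1 - (snd p - fst p)))
        * gap_poly t (n - 1 - (n - 1 - (snd p - fst p)))"
      unfolding F_def R_def using sum_missing_range by simp
  qed
  also have "\<dots> = (\<Sum>m<n. of_nat (m + 1) * of_int (path_sa m) * gap_poly t (n - 1 - m))"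
    using sum_pairs_by_distance[of "\<lambda>m. of_int (path_sa m) * gap_poly t (n - 1 - m)" n]
    unfolding K_def by (simp add: mult.assoc)
  finally show ?thesis .
qed

section \<open>Generating functions\<close>

unbundle fps_syntax

definition path_sa_fps :: "'a::comm_ring_1 fps" where
  "path_sa_fps = Abs_fps (\<lambda>m. of_int (path_sa m))"

definition path_poly_fps :: "'a::comm_ring_1 \<Rightarrow> 'a fps" where
  "path_poly_fps t = Abs_fps (path_poly t)"

definition cycle_sa_fps :: "'a::comm_ring_1 fps" where
  "cycle_sa_fps = Abs_fps (\<lambda>n. of_int (cycle_sa n))"

definition cycle_poly_fps :: "'a::comm_ring_1 \<Rightarrow> 'a fps" where
  "cycle_poly_fps t = Abs_fps (cycle_poly t)"

lemma path_poly_fps_eq: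
  "path_poly_fps t = path_sa_fps + fps_const t * fps_X * path_sa_fps * path_poly_fps t"
proof (rule fps_ext)
  fix m
  show "path_poly_fps t $ m = (path_sa_fps + fps_const t * fps_X * path_sa_fps * path_poly_fps t) $ m"
  proof (cases m)
    case (Suc k)
    have "(fps_const t * fps_X * path_sa_fps * path_poly_fps t) $ m = t * (path_sa_fps * path_poly_fps t) $ k"
      unfolding Suc by (simp add: mult.assoc)
    also have "\<dots> = (\<Sum>j<m. of_int (path_sa j) * t * path_poly t (m - 1 - j))"
      unfolding fps_mult_nth Suc path_sa_fps_def path_poly_fps_def
      by (simp add: sum_distrib_left atLeast0AtMost lessThan_Suc_atMost algebra_simps)
    finally show ?thesis
      using path_poly_rec[of t m] unfolding path_poly_fps_def path_sa_fps_def by simp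
  qed (simp add: path_poly_fps_def path_sa_fps_def path_sa_def)
qed

lemma gap_poly_fps_eq:
  "Abs_fps (gap_poly t) = fps_const t * (1 + fps_const t * fps_X * path_poly_fps t)"
proof (rule fps_ext)
  fix n show "Abs_fps (gap_poly t) $ n = (fps_const t * (1 + fps_const t * fps_X * path_poly_fps t)) $ n"
    by (cases n) (simp_all add: path_poly_fps_def mult.assoc power2_eq_square)
qed

lemma cycle_poly_fps_eq:
  "cycle_poly_fps t = cycle_sa_fps + fps_X * fps_deriv (fps_X * path_sa_fps) * Abs_fps (gap_poly t)"
proof (rule fps_ext)
  fix n
  show "cycle_poly_fps t $ n = (cycle_sa_fps + fps_X * fps_deriv (fps_X * path_sa_fps) * Abs_fps (gap_poly t)) $ n"
  proof (cases n)
    case 0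
    then show ?thesis unfolding cycle_poly_fps_def cycle_sa_fps_def
      using cycle_poly_decomp[of t 0] by simp
  next
    case (Suc k)
    have deriv: "fps_deriv (fps_X * path_sa_fps) $ i = of_nat (i + 1) * of_int (path_sa i)" for i
      by (simp add: path_sa_fps_def algebra_simps)
    have "(fps_X * fps_deriv (fps_X * path_sa_fps) * Abs_fps (gap_poly t)) $ n
        = (fps_deriv (fps_X * path_sa_fps) * Abs_fps (gap_poly t)) $ k"
      unfolding Suc mult.assoc fps_X_mult_nth by simp
    also have "\<dots> = (\<Sum>i=0..k. of_nat (i + 1) * of_int (path_sa i) * gap_poly t (k - i))"
      unfolding fps_mult_nth deriv by simp
    also have "\<dots> = (\<Sum>m<n. of_nat (m + 1) * of_int (path_sa m) * gap_poly t (n - 1 - m))"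
      using Suc by (simp add: atLeast0AtMost lessThan_Suc_atMost)
    finally show ?thesis
      using cycle_poly_decomp[of t n] unfolding cycle_poly_fps_def cycle_sa_fps_def by simp
  qed
qed

lemma fps_compose_neg_X_eq_self:
  fixes f :: "'a::comm_ring_1 fps"
  assumes "\<And>n. odd n \<Longrightarrow> f $ n = 0"
  shows "f oo - fps_X = f"
proof (rule fps_ext)
  fix n show "(f oo - fps_X) $ n = f $ n"
    by (cases "even n") (simp_all add: fps_compose_uminus' assms)
qed

lemma fps_add_compose_neg_X_eq_2:
  fixes f :: "'a::comm_ring_1 fps"
  assumes "f $ 0 = 1" "\<And>n. even n \<Longrightarrow> n > 0 \<Longrightarrow> f $ n = 0"
  shows "f + (f oo - fps_X) = 2"
proof (rule fps_ext)
  fix n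
  show "(f + (f oo - fps_X)) $ n = 2 $ n"
  proof (cases "even n")
    case True
    then show ?thesis
      using assms by (cases "n = 0") (simp_all add: fps_compose_uminus' fps_numeral_nth numeral_fps_const)
  next
    case False
    then have "(f oo - fps_X) $ n = - f $ n" "n \<noteq> 0"
      by (auto simp: fps_compose_uminus' odd_pos)
    then show ?thesis by (simp add: fps_numeral_nth)
  qed
qed

lemma path_sa_fps_even: "path_sa_fps oo - fps_X = path_sa_fps"
  by (rule fps_compose_neg_X_eq_self) (simp add: path_sa_fps_def path_sa_odd)

lemma cycle_sa_fps_even: "cycle_sa_fps oo - fps_X = cycle_sa_fps"
  by (rule fps_compose_neg_X_eq_self) (simp add: cycle_sa_fps_def cycle_sa_odd)

lemma fps_deriv_X_path_sa_fps_even: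
  "fps_deriv (fps_X * path_sa_fps) oo - fps_X = fps_deriv (fps_X * path_sa_fps)"
  by (rule fps_compose_neg_X_eq_self) (simp add: path_sa_fps_def path_sa_odd)

lemma path_poly_fps_1_even_part: "path_poly_fps 1 + (path_poly_fps 1 oo - fps_X) = 2"
  by (rule fps_add_compose_neg_X_eq_2) (simp_all add: path_poly_fps_def path_poly_1_even)

lemma cycle_poly_fps_1_even_part: "cycle_poly_fps 1 + (cycle_poly_fps 1 oo - fps_X) = 2"
  by (rule fps_add_compose_neg_X_eq_2)
    (simp add: cycle_poly_fps_def cycle_poly_def, simp add: cycle_poly_fps_def cycle_poly_1_even)

lemma fps_compose_neg_X_path_poly_fps:
  fixes t :: "'a::idom"
  shows "path_poly_fps t oo - fps_X
     = path_sa_fps - fps_const t * fps_X * path_sa_fps * (path_poly_fps t oo - fps_X)"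
proof -
  have "path_poly_fps t oo - fps_X
      = (path_sa_fps + fps_const t * fps_X * path_sa_fps * path_poly_fps t) oo - fps_X"
    by (subst path_poly_fps_eq) (rule refl)
  also have "\<dots> = path_sa_fps - fps_const t * fps_X * path_sa_fps * (path_poly_fps t oo - fps_X)"
    by (simp add: fps_compose_add_distrib fps_compose_mult_distrib path_sa_fps_even)
  finally show ?thesis .
qed

lemma path_sa_fps_quadratic: "path_sa_fps + fps_X^2 * path_sa_fps^2 = (1 :: 'a::field_char_0 fps)"
proof -
  let ?w = "path_poly_fps (1::'a)"
  have "?w = path_sa_fps + fps_X * path_sa_fps * ?w"
    using path_poly_fps_eq[of 1] by simp
  moreover have "?w oo - fps_X = path_sa_fps - fps_X * path_sa_fps * (?w oo - fps_X)"
    using fps_compose_neg_X_path_poly_fps[of 1] by simp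
  moreover have "?w + (?w oo - fps_X) = 2" by (rule path_poly_fps_1_even_part)
  ultimately have "2 * (path_sa_fps + fps_X^2 * path_sa_fps^2) = 2 * (1 :: 'a fps)"
    by algebra
  then show ?thesis by (metis mult_cancel_left zero_neq_numeral)
qed

lemma cycle_sa_fps_eq:
  "cycle_sa_fps = (1 :: 'a::field_char_0 fps) - fps_X^2 * fps_deriv (fps_X * path_sa_fps)"
proof -
  define D :: "'a fps" where "D = fps_deriv (fps_X * path_sa_fps)"
  let ?w = "path_poly_fps (1::'a)"
  have A: "cycle_poly_fps 1 = cycle_sa_fps + fps_X * D * (1 + fps_X * ?w)"
    unfolding cycle_poly_fps_eq[of "1::'a", folded D_def] gap_poly_fps_eq by simp
  have "D oo - fps_X = D"
    unfolding D_def by (rule fps_deriv_X_path_sa_fps_even)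
  with A have "cycle_poly_fps 1 oo - fps_X = cycle_sa_fps - fps_X * D * (1 - fps_X * (?w oo - fps_X))"
    by (simp add: fps_compose_add_distrib fps_compose_mult_distrib cycle_sa_fps_even)
  with A have "2 * cycle_sa_fps = 2 * (1 - fps_X^2 * D)"
    using cycle_poly_fps_1_even_part[where 'a = 'a] path_poly_fps_1_even_part[where 'a = 'a] by algebra
  then show ?thesis unfolding D_def by (metis mult_cancel_left zero_neq_numeral)
qed

context
  fixes S :: "'a::field_char_0 fps"
  assumes S_sq: "S^2 = 1 + 4 * fps_X^2" and S_nth_0: "S $ 0 = 1"
begin

lemma sqrt_eq_path_sa_fps: "S = 1 + 2 * fps_X^2 * path_sa_fps"
proof -
  define Y :: "'a fps" where "Y = 1 + 2 * fps_X^2 * path_sa_fps"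
  have "(Y - S) * (Y + S) = 0"
    unfolding Y_def using S_sq path_sa_fps_quadratic[where 'a = 'a] by algebra
  moreover have "(Y + S) $ 0 \<noteq> 0"
    unfolding Y_def using S_nth_0 by (simp add: power2_eq_square numeral_fps_const)
  then have "Y + S \<noteq> 0" by (metis fps_zero_nth)
  ultimately show ?thesis unfolding Y_def by simp
qed

lemma sqrt_mult_fps_deriv_X_path_sa_fps: "S * fps_deriv (fps_X * path_sa_fps) = path_sa_fps"
proof -
  let ?P = "path_sa_fps :: 'a fps" and ?D = "fps_deriv (fps_X * path_sa_fps) :: 'a fps"
  have "fps_deriv S = 2 * fps_X * ?P + 2 * fps_X * ?D"
    by (subst sqrt_eq_path_sa_fps) (simp add: power2_eq_square algebra_simps numeral_fps_const)
  moreover have "2 * S * fps_deriv S = 8 * fps_X"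
    using arg_cong[OF S_sq, of fps_deriv] by (simp add: power2_eq_square numeral_fps_const algebra_simps)
  ultimately have "4 * fps_X * (S * ?P + S * ?D - 2) = 0"
    by algebra
  then have "S * ?P + S * ?D - 2 = 0"
    by (metis mult_eq_0_iff fps_X_neq_zero zero_neq_numeral)
  then have "S * ?D = 2 - S * ?P" by (simp add: algebra_simps)
  also have "2 = ?P * (1 + S)"
    using path_sa_fps_quadratic[where 'a = 'a] by (subst sqrt_eq_path_sa_fps) algebra
  finally show ?thesis by (simp add: algebra_simps)
qed

lemma cycle_poly_fps_closed_form:
  "2 * S * (fps_const t - fps_const (t^2 - 1) * fps_X) * (cycle_poly_fps t - fps_const (1/2))
     = fps_const (t^2 + 1) * fps_X + fps_const t * S"
proof -
  let ?T = "fps_const t" and ?X = "fps_X :: 'a fps" and ?P = "path_sa_fps :: 'a fps"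
  let ?W = "path_poly_fps t" and ?A = "cycle_poly_fps t"
  \<comment> \<open>\<open>W\<^sub>t = P / u\<close>; after multiplying by \<open>u\<close> everything is a polynomial in \<open>x\<close>, \<open>t\<close>, \<open>P\<close> and \<open>S\<close>.\<close>
  define u where "u = 1 - ?T * ?X * ?P"
  have A: "?A = 1 - ?X^2 * fps_deriv (?X * ?P) + ?X * fps_deriv (?X * ?P) * (?T * (1 + ?T * ?X * ?W))"
    using cycle_poly_fps_eq[of t] gap_poly_fps_eq[of t] cycle_sa_fps_eq by simp
  have W: "?W * u = ?P"
    using path_poly_fps_eq[of t] unfolding u_def by algebra
  have half: "2 * fps_const (1/2) = (1 :: 'a fps)"
    by (simp add: numeral_fps_const)
  have "2 * S * u * (?A - fps_const (1/2))
      = S * u + 2 * u * ?X * ?P * (?T - ?X) + 2 * ?X^2 * ?T^2 * ?P^2"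
    using A W half sqrt_mult_fps_deriv_X_path_sa_fps by algebra
  moreover have "(?T - (?T^2 - 1) * ?X)
      * (S * u + 2 * u * ?X * ?P * (?T - ?X) + 2 * ?X^2 * ?T^2 * ?P^2)
      = u * ((?T^2 + 1) * ?X + ?T * S)"
    unfolding u_def using sqrt_eq_path_sa_fps path_sa_fps_quadratic[where 'a = 'a] by algebra
  ultimately have "u * (2 * S * (?T - (?T^2 - 1) * ?X) * (?A - fps_const (1/2)))
      = u * ((?T^2 + 1) * ?X + ?T * S)"
    by algebra
  moreover have "u $ 0 = 1" unfolding u_def by simp
  then have "u \<noteq> 0" by (metis fps_zero_nth zero_neq_one)
  ultimately have "2 * S * (?T - (?T^2 - 1) * ?X) * (?A - fps_const (1/2)) = (?T^2 + 1) * ?X + ?T * S"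
    by simp
  moreover have "fps_const (t^2 - 1) = ?T^2 - 1" "fps_const (t^2 + 1) = ?T^2 + 1"
    by (metis fps_const_1_eq_1 fps_const_sub fps_const_add fps_const_power)+
  ultimately show ?thesis by (simp only:)
qed

end

lemma fps_eq_one_divide_mult_divide:
  fixes a b c e :: "'a::field fps"
  assumes "a $ 0 \<noteq> 0" "b $ 0 \<noteq> 0" "a * b * c = e"
  shows "c = 1 / a * (e / b)"
proof -
  have "1 / a * (e / b) = (inverse a * a) * (inverse b * b) * c"
    using assms by (simp add: fps_divide_unit ac_simps)
  then show ?thesis using assms(1,2) by (simp add: inverse_mult_eq_1)
qed

section \<open>Coefficients in \<open>\<rat>(t)\<close>\<close>

lemma to_fract_of_int [simp]: "to_fract (of_int k) = of_int k"
  by (induction k rule: int_induct[of _ 0]) simp_all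

lemma to_fract_power [simp]: "to_fract (x ^ n) = to_fract x ^ n"
  by (induction n) simp_all

lemma poly_to_ratfun_conv: "poly_to_ratfun p = to_fract (map_poly of_int p)"
  unfolding poly_to_ratfun_def to_fract_def ..

lemma poly_to_ratfun_add: "poly_to_ratfun (p + q) = poly_to_ratfun p + poly_to_ratfun q"
proof -
  have "map_poly (of_int :: int \<Rightarrow> rat) (p + q) = map_poly of_int p + map_poly of_int q"
    by (rule poly_eqI) (simp add: coeff_map_poly)
  then show ?thesis unfolding poly_to_ratfun_conv by simp
qed

lemma poly_to_ratfun_0: "poly_to_ratfun 0 = 0"
  by (simp add: poly_to_ratfun_conv)

lemma poly_to_ratfun_sum: "poly_to_ratfun (\<Sum>x\<in>A. f x) = (\<Sum>x\<in>A. poly_to_ratfun (f x))"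
  by (induction A rule: infinite_finite_induct) (simp_all add: poly_to_ratfun_0 poly_to_ratfun_add)

lemma poly_to_ratfun_monom: "poly_to_ratfun (monom c k) = of_int c * tvar ^ k"
proof -
  have "map_poly (of_int :: int \<Rightarrow> rat) (monom c k) = monom (of_int c) k"
    by (simp add: map_poly_monom)
  also have "\<dots> = of_int c * [:0, 1:] ^ k"
    by (simp add: monom_altdef of_int_poly)
  finally have "map_poly (of_int :: int \<Rightarrow> rat) (monom c k) = of_int c * [:0, 1:] ^ k" .
  then show ?thesis unfolding poly_to_ratfun_conv tvar_def to_fract_def[symmetric] by simp
qed

lemma poly_to_ratfun_sa_poly_cycle:
  "poly_to_ratfun (sa_poly (cycle_adj n) (cycle_verts n)) = cycle_poly tvar n"
  unfolding sa_poly_def cycle_verts_def cycle_poly_def poly_to_ratfun_sum poly_to_ratfun_monom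
  by (intro sum.cong refl) (auto simp: card_Diff_subset finite_subset)

lemma tvar_neq_0: "tvar \<noteq> 0"
  unfolding tvar_def to_fract_def[symmetric] by simp

lemma sqrt_1_4x2_sq: "sqrt_1_4x2^2 = 1 + 4 * fps_X^2"
proof -
  have "(1 + 4 * fps_X^2 :: ratfun fps) $ 0 = 1"
    by (simp add: numeral_fps_const power2_eq_square)
  then show ?thesis
    using power_radical[of "1 + 4 * fps_X^2 :: ratfun fps" "\<lambda>_ _. 1" 1]
    unfolding sqrt_1_4x2_def numeral_2_eq_2 by simp
qed

lemma sqrt_1_4x2_nth_0: "sqrt_1_4x2 $ 0 = 1"
  unfolding sqrt_1_4x2_def by simp

theorem mainTheorem2:
  shows "Abs_fps (\<lambda>n. poly_to_ratfun (sa_poly (cycle_adj n) (cycle_verts n)))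
    = fps_const (1/2) + 1 / (2 * sqrt_1_4x2) *
      ((fps_const (tvar^2 + 1) * fps_X + fps_const tvar * sqrt_1_4x2)
        / (fps_const tvar - fps_const (tvar^2 - 1) * fps_X))"
proof -
  let ?S = sqrt_1_4x2 and ?A = "cycle_poly_fps tvar"
  have "Abs_fps (\<lambda>n. poly_to_ratfun (sa_poly (cycle_adj n) (cycle_verts n))) = ?A"
    unfolding poly_to_ratfun_sa_poly_cycle cycle_poly_fps_def ..
  moreover have "?A - fps_const (1/2) = 1 / (2 * ?S) *
      ((fps_const (tvar^2 + 1) * fps_X + fps_const tvar * ?S)
        / (fps_const tvar - fps_const (tvar^2 - 1) * fps_X))"
  proof (rule fps_eq_one_divide_mult_divide)
    show "(2 * ?S) $ 0 \<noteq> 0" by (simp add: sqrt_1_4x2_nth_0 numeral_fps_const)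
    show "(fps_const tvar - fps_const (tvar^2 - 1) * fps_X) $ 0 \<noteq> 0" by (simp add: tvar_neq_0)
  qed (rule cycle_poly_fps_closed_form[OF sqrt_1_4x2_sq sqrt_1_4x2_nth_0])
  ultimately show ?thesis by (simp add: algebra_simps)
qed

end
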